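(* Let $N\ge1$, $0\le\alpha\le1/L$ and $0\le\beta\le2/L-\alpha$, and run the noisy algorithm with these constant parameters. Then $$\mathbb{E}f(\theta_N)-f(\theta_* )\le\min\Big\{\frac{\|\theta_0-\theta_*\|^2}{\alpha N^2}+\frac{(\alpha N+\beta)^2}{\alpha N}\operatorname{tr}(C),\ \frac{4\|\theta_0-\theta_*\|^2}{(\alpha+\beta)N}+\frac{4(\alpha N+\beta)^2}{\alpha+\beta}\operatorname{tr}(C)\Big\},$$ where a term with zero denominator is interpreted as $+\infty$.
   Context: Let $H\in\mathbb{R}^{d\times d}$ be symmetric positive definite with largest eigenvalue $L$, $q\in\mathbb{R}^d$, $f(\theta)=\frac12\langle\theta,H\theta\rangle-\langle q,\theta\rangle$, $\theta_*=H^{-1}q$. Let $(\varepsilon_n)_{n\ge2}$ be random vectors in $\mathbb{R}^d$ with $\mathbb{E}\varepsilon_n=0$, $\mathbb{E}[\varepsilon_n\varepsilon_m^\top]=0$ for $n\neq m$, and $\mathbb{E}[\varepsilon_n\varepsilon_n^\top]=C$ for all $n$, for a fixed positive semidefinite $C$. The noisy algorithm with parameters $\alpha,\beta$: given deterministic $\theta_0\in\mathbb{R}^d$, set $\theta_1=\theta_0$ and for $n\ge1$ $$\theta_{n+1}=\frac{2n}{n+1}\theta_n-\frac{n-1}{n+1}\theta_{n-1}-\frac{1}{n+1}\Big(n(\alpha+\beta)H(\theta_n-\theta_* )-(n-1)\beta H(\theta_{n-1}-\theta_* )-(n\alpha+\beta)\varepsilon_{n+1}\Big),$$ i.e. the gradient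 $f'(\omega_n)$, $\omega_n=\frac{n(\alpha+\beta)\theta_n-(n-1)\beta\theta_{n-1}}{n\alpha+\beta}$, in the recursion $\theta_{n+1}=\frac{2n}{n+1}\theta_n-\frac{n-1}{n+1}\theta_{n-1}-\frac{n\alpha+\beta}{n+1}f'(\omega_n)$ is replaced by $f'(\omega_n)-\varepsilon_{n+1}$. Equivalently, $\eta_n=n(\theta_n-\theta_* )$ satisfies $\eta_0=0$, $\eta_1=\theta_0-\theta_*$, $\eta_{n+1}=(I-\alpha H)\eta_n+(I-\beta H)(\eta_n-\eta_{n-1})+(n\alpha+\beta)\varepsilon_{n+1}$. *)

theory Defs
  imports "HOL-Analysis.Analysis" "HOL-Probability.Probability"
begin

definition quad_obj :: "real^'d^'d \<Rightarrow> real^'d \<Rightarrow> real^'d \<Rightarrow> real" where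
  "quad_obj H q \<theta> = (1/2) * (\<theta> \<bullet> (H *v \<theta>)) - q \<bullet> \<theta>"

definition largest_eigenvalue :: "real^'d^'d \<Rightarrow> real" where
  "largest_eigenvalue H = Max {c. \<exists>v. v \<noteq> 0 \<and> H *v v = c *\<^sub>R v}"

text \<open>Here ts = theta_*, and the clause for Suc (Suc k) is the step n = k+1.\<close>
fun noisy_theta :: "real^'d^'d \<Rightarrow> real^'d \<Rightarrow> real \<Rightarrow> real \<Rightarrow> real^'d
    \<Rightarrow> (nat \<Rightarrow> real^'d) \<Rightarrow> nat \<Rightarrow> real^'d" where
  "noisy_theta H ts a b th0 e 0 = th0"
| "noisy_theta H ts a b th0 e (Suc 0) = th0"
| "noisy_theta H ts a b th0 e (Suc (Suc k)) =
    (let n = real (Suc k); xn = noisy_theta H ts a b th0 e (Suc k);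
         xp = noisy_theta H ts a b th0 e k in
     (2 * n / (n + 1)) *\<^sub>R xn - ((n - 1) / (n + 1)) *\<^sub>R xp
     - (1 / (n + 1)) *\<^sub>R ((n * (a + b)) *\<^sub>R (H *v (xn - ts))
          - ((n - 1) * b) *\<^sub>R (H *v (xp - ts))
          - (n * a + b) *\<^sub>R e (Suc (Suc k))))"

end

theory Submission
  imports Defs
begin

text \<open>
  With \<open>\<eta>\<^sub>n = n (\<theta>\<^sub>n - \<theta>\<^sub>*)\<close> the algorithm is a linear two-step recursion driven by the noise, so
  \<open>\<eta>\<^sub>N = P\<^sub>N \<eta>\<^sub>1 + \<Sum>\<^sub>j ((j - 1) \<alpha> + \<beta>) P\<^bsub>N+1-j\<^esub> \<epsilon>\<^sub>j\<close>, where \<open>P\<^sub>m\<close> solves the homogeneous recursion.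
  On an eigenvector of \<open>H\<close> with eigenvalue \<open>\<lambda>\<close>, \<open>P\<^sub>m\<close> acts as a scalar sequence \<open>s\<^sub>m\<close> of the same
  recursion with \<open>a = \<alpha> \<lambda>\<close> and \<open>b = \<beta> \<lambda>\<close>. As long as \<open>a + b \<le> 2\<close>, a conserved quantity of that
  recursion gives \<open>(a + b) s\<^sub>m\<^sup>2 \<le> 2 m\<close> and a Lyapunov function gives \<open>a s\<^sub>m\<^sup>2 \<le> 2\<close>; diagonalising \<open>H\<close>,
  \<open>\<langle>P\<^sub>m v, H P\<^sub>m v\<rangle>\<close> is at most \<open>2/\<alpha>\<close> resp. \<open>2 m/(\<alpha> + \<beta>)\<close> times \<open>|v|\<^sup>2\<close>.
  Finally \<open>f(\<theta>\<^sub>N) - f(\<theta>\<^sub>*) = \<langle>\<eta>\<^sub>N, H \<eta>\<^sub>N\<rangle> / (2 N\<^sup>2)\<close>, and because the noise is centred and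
  uncorrelated, the expectation of this quadratic form splits into the deterministic term and one
  term per noise vector, each bounded by the same constant times \<open>tr C\<close>.
\<close>

section \<open>A scalar two-step recursion\<close>

fun mode_seq :: "real \<Rightarrow> real \<Rightarrow> nat \<Rightarrow> real" where
  "mode_seq a b 0 = 0"
| "mode_seq a b (Suc 0) = 1"
| "mode_seq a b (Suc (Suc m)) = (2 - a - b) * mode_seq a b (Suc m) - (1 - b) * mode_seq a b m"

lemma mode_seq_invariant:
  "(mode_seq a b (Suc m))\<^sup>2 - (2 - a - b) * mode_seq a b (Suc m) * mode_seq a b m
     + (1 - b) * (mode_seq a b m)\<^sup>2 = (1 - b) ^ m"
proof (induction m)
  case 0
  then show ?case by simp
next
  case (Suc m)
  define y z where "y = mode_seq a b (Suc m)" and "z = mode_seq a b m"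
  have "(mode_seq a b (Suc (Suc m)))\<^sup>2 - (2 - a - b) * mode_seq a b (Suc (Suc m)) * y + (1 - b) * y\<^sup>2
      = (1 - b) * (y\<^sup>2 - (2 - a - b) * y * z + (1 - b) * z\<^sup>2)"
    by (simp add: y_def z_def algebra_simps power2_eq_square)
  with Suc.IH show ?case by (simp add: y_def z_def)
qed

lemma mode_seq_sq_le_linear:
  assumes "0 \<le> a" "0 \<le> b" "a + b \<le> 2"
  shows "(a + b) * (mode_seq a b m)\<^sup>2 \<le> 2 * real m"
proof (induction m)
  case 0
  then show ?case by simp
next
  case (Suc m)
  define y z where "y = mode_seq a b (Suc m)" and "z = mode_seq a b m"
  have inv: "y\<^sup>2 - (2 - a - b) * y * z + (1 - b) * z\<^sup>2 = (1 - b) ^ m"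
    using mode_seq_invariant[of a b m] by (simp add: y_def z_def)
  have "\<bar>1 - b\<bar> ^ m \<le> 1"
    using assms by (intro power_le_one) auto
  then have "(1 - b) ^ m \<le> 1"
    by (metis abs_le_D1 power_abs order.trans)
  moreover have "(2 - a - b) * y * z \<le> (2 - a - b) * (y\<^sup>2 + z\<^sup>2) / 2"
  proof -
    have "0 \<le> (2 - a - b) * (y - z)\<^sup>2" using assms by simp
    then show ?thesis by (simp add: algebra_simps power2_eq_square)
  qed
  ultimately have "(a + b) * y\<^sup>2 \<le> 2 + (b - a) * z\<^sup>2"
    using inv by (simp add: algebra_simps power2_eq_square)
  moreover have "0 \<le> a * z\<^sup>2" using assms by simp
  ultimately show ?case using Suc.IH by (simp add: y_def z_def algebra_simps)
qed

definition mode_energy :: "real \<Rightarrow> real \<Rightarrow> nat \<Rightarrow> real" where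
  "mode_energy a b n =
     (let s = mode_seq a b n; d = mode_seq a b (Suc n) - mode_seq a b n; t = a + b
      in a * (t + a) * s\<^sup>2 + 2 * a * t * s * d + (t + a) * d\<^sup>2)"

lemma mode_energy_Suc_le:
  assumes "0 \<le> a" "0 \<le> b" "a + b \<le> 2"
  shows "mode_energy a b (Suc n) \<le> mode_energy a b n"
proof -
  define s d t where "s = mode_seq a b n" and "d = mode_seq a b (Suc n) - mode_seq a b n"
    and "t = a + b"
  have s1: "mode_seq a b (Suc n) = s + d" by (simp add: s_def d_def)
  have s2: "mode_seq a b (Suc (Suc n)) = (2 - t) * (s + d) - (1 - b) * s"
    by (simp add: s_def d_def t_def)
  have "mode_energy a b (Suc n) - mode_energy a b n = - (a\<^sup>2 * b * s\<^sup>2) - b * (2 * t + a - t\<^sup>2) * d\<^sup>2"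
    unfolding mode_energy_def Let_def s1 s2 s_def[symmetric] t_def[symmetric]
    by (simp add: t_def algebra_simps power2_eq_square)
  moreover have "0 \<le> b * (2 * t + a - t\<^sup>2) * d\<^sup>2"
  proof -
    have "0 \<le> t * (2 - t) + a" using assms by (simp add: t_def)
    then have "0 \<le> 2 * t + a - t\<^sup>2" by (simp add: algebra_simps power2_eq_square)
    then show ?thesis using assms by simp
  qed
  moreover have "0 \<le> a\<^sup>2 * b * s\<^sup>2" using assms by simp
  ultimately show ?thesis by linarith
qed

lemma mode_energy_lower:
  assumes "0 < a" "0 \<le> b" "a + b \<le> 2"
  shows "(2 * a + b) * a * (mode_seq a b n)\<^sup>2 \<le> 2 * mode_energy a b n"
proof -
  define s d t where "s = mode_seq a b n" and "d = mode_seq a b (Suc n) - mode_seq a b n"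
    and "t = a + b"
  have pos: "0 < t + a" using assms by (simp add: t_def)
  have s1: "mode_seq a b (Suc n) = s + d" by (simp add: s_def d_def)
  have "0 \<le> (t + a)\<^sup>2 - 2 * a * t\<^sup>2"
  proof -
    have "a * t * t \<le> a * t * 2" using assms by (intro mult_left_mono) (auto simp: t_def)
    moreover have "0 \<le> (t - a)\<^sup>2" by simp
    ultimately show ?thesis by (simp add: algebra_simps power2_eq_square)
  qed
  then have "0 \<le> 2 * ((t + a) * d + a * t * s)\<^sup>2 + a * ((t + a)\<^sup>2 - 2 * a * t\<^sup>2) * s\<^sup>2"
    using assms by simp
  also have "\<dots> = (t + a) * (2 * mode_energy a b n - (t + a) * a * s\<^sup>2)"
    unfolding mode_energy_def Let_def s1 s_def[symmetric] t_def[symmetric]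
    by (simp add: algebra_simps power2_eq_square)
  finally have "0 \<le> 2 * mode_energy a b n - (t + a) * a * s\<^sup>2"
    using pos by (simp add: zero_le_mult_iff)
  then show ?thesis by (simp add: s_def t_def algebra_simps)
qed

lemma mode_seq_sq_le_const:
  assumes "0 \<le> a" "0 \<le> b" "a + b \<le> 2"
  shows "a * (mode_seq a b m)\<^sup>2 \<le> 2"
proof (cases "a = 0")
  case True
  then show ?thesis by simp
next
  case False
  then have a: "0 < a" using assms(1) by simp
  have "mode_energy a b m \<le> mode_energy a b 0"
    by (induction m) (use mode_energy_Suc_le[OF assms] order_trans in blast)+
  also have "\<dots> = 2 * a + b" by (simp add: mode_energy_def)
  finally have "(2 * a + b) * (a * (mode_seq a b m)\<^sup>2) \<le> (2 * a + b) * 2"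
    using mode_energy_lower[OF a assms(2,3), of m] by (simp add: algebra_simps)
  moreover have "0 < 2 * a + b" using a assms by simp
  ultimately show ?thesis by (rule mult_left_le_imp_le)
qed

section \<open>Orthonormal eigenbases of symmetric matrices\<close>

lemma symmetric_matrix_inner_swap:
  fixes H :: "real^'n^'n"
  assumes "transpose H = H"
  shows "x \<bullet> (H *v y) = (H *v x) \<bullet> y"
  by (metis assms dot_lmul_matrix transpose_matrix_vector)

lemma rayleigh_maximiser_eigenvector:
  fixes H :: "real^'n^'n"
  assumes sym: "transpose H = H" and S: "subspace S" "\<forall>z\<in>S. H *v z \<in> S"
    and x: "x \<in> S" "x \<bullet> x = 1"
    and max: "\<And>z. z \<in> S \<Longrightarrow> z \<bullet> (H *v z) \<le> (x \<bullet> (H *v x)) * (z \<bullet> z)"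
  shows "H *v x = (x \<bullet> (H *v x)) *\<^sub>R x"
proof -
  define l where "l = x \<bullet> (H *v x)"
  define w where "w = H *v x - l *\<^sub>R x"
  have wS: "w \<in> S" using S x by (simp add: w_def subspace_diff subspace_scale)
  have "w = 0"
  proof (rule ccontr)
    assume "w \<noteq> 0"
    then have wp: "0 < w \<bullet> w" by simp
    define c where "c = l * (w \<bullet> w) - w \<bullet> (H *v w)"
    have c0: "0 \<le> c" using max[OF wS] by (simp add: c_def l_def)
    \<comment> \<open>a small step \<open>r\<close> from \<open>x\<close> towards \<open>w\<close> would increase the Rayleigh quotient\<close>
    define r where "r = (w \<bullet> w) / (c + 1)"
    have rp: "0 < r" using wp c0 by (simp add: r_def)
    have "x + r *\<^sub>R w \<in> S" using S x wS by (simp add: subspace_add subspace_scale)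
    from max[OF this]
    have "(x + r *\<^sub>R w) \<bullet> (H *v (x + r *\<^sub>R w)) \<le> l * ((x + r *\<^sub>R w) \<bullet> (x + r *\<^sub>R w))"
      by (simp add: l_def)
    moreover have "(x + r *\<^sub>R w) \<bullet> (H *v (x + r *\<^sub>R w))
        = l + 2 * r * (w \<bullet> (H *v x)) + r\<^sup>2 * (w \<bullet> (H *v w))"
      using symmetric_matrix_inner_swap[OF sym, of x w]
      by (simp add: matrix_vector_right_distrib matrix_vector_mult_scaleR inner_add_left
          inner_add_right l_def algebra_simps power2_eq_square inner_commute)
    moreover have "l * ((x + r *\<^sub>R w) \<bullet> (x + r *\<^sub>R w)) = l + 2 * r * l * (w \<bullet> x) + r\<^sup>2 * l * (w \<bullet> w)"
      using x by (simp add: inner_add_left inner_add_right algebra_simps power2_eq_square inner_commute)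
    moreover have "w \<bullet> (H *v x) = l * (w \<bullet> x) + w \<bullet> w"
      by (simp add: w_def inner_diff_right algebra_simps)
    ultimately have "2 * r * (w \<bullet> w) \<le> r\<^sup>2 * c"
      by (simp add: c_def algebra_simps)
    then have "2 * (w \<bullet> w) \<le> r * c" using rp by (simp add: power2_eq_square)
    moreover have "r * c < w \<bullet> w"
    proof -
      have "r * c = (w \<bullet> w) * (c / (c + 1))" by (simp add: r_def)
      also have "\<dots> < (w \<bullet> w) * 1" using wp c0 by (intro mult_strict_left_mono) auto
      finally show ?thesis by simp
    qed
    ultimately show False using wp by linarith
  qed
  then show ?thesis by (simp add: w_def l_def)
qed

lemma invariant_subspace_has_unit_eigenvector:
  fixes H :: "real^'n^'n"
  assumes sym: "transpose H = H" and S: "subspace S" "\<forall>z\<in>S. H *v z \<in> S" "S \<noteq> {0}"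
  obtains x where "x \<in> S" "norm x = 1" "H *v x = (x \<bullet> (H *v x)) *\<^sub>R x"
proof -
  obtain y where y: "y \<in> S" "y \<noteq> 0" using S(1,3) subspace_0 by blast
  define K where "K = S \<inter> sphere 0 1"
  have "compact K" unfolding K_def
    using closed_subspace[OF S(1)] compact_sphere by (simp add: closed_Int_compact)
  moreover have "(1 / norm y) *\<^sub>R y \<in> K"
    using y S(1) by (simp add: K_def subspace_scale)
  moreover have "continuous_on K (\<lambda>x. x \<bullet> (H *v x))"
    by (intro continuous_intros linear_continuous_on) auto
  ultimately obtain x where x: "x \<in> K" and xmax: "\<And>z. z \<in> K \<Longrightarrow> z \<bullet> (H *v z) \<le> x \<bullet> (H *v x)"
    using continuous_attains_sup[of K "\<lambda>x. x \<bullet> (H *v x)"] by blast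
  have xS: "x \<in> S" and nx: "norm x = 1" using x by (auto simp: K_def)
  have "z \<bullet> (H *v z) \<le> (x \<bullet> (H *v x)) * (z \<bullet> z)" if "z \<in> S" for z
  proof (cases "z = 0")
    case True
    then show ?thesis by simp
  next
    case False
    have "(1 / norm z) *\<^sub>R z \<in> K" using that False S(1) by (simp add: K_def subspace_scale)
    from xmax[OF this] have "(z \<bullet> (H *v z)) / (norm z)\<^sup>2 \<le> x \<bullet> (H *v x)"
      by (simp add: matrix_vector_mult_scaleR power2_eq_square)
    then show ?thesis
      using False by (simp add: divide_le_eq power2_norm_eq_inner mult.commute)
  qed
  then have "H *v x = (x \<bullet> (H *v x)) *\<^sub>R x"
    using nx by (intro rayleigh_maximiser_eigenvector[OF sym S(1,2) xS]) (auto simp: norm_eq_sqrt_inner)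
  with xS nx that show ?thesis by blast
qed

lemma subspace_subset_span_insert:
  fixes x :: "'a::real_inner"
  assumes "subspace S" "x \<in> S" "x \<bullet> x = 1" "S \<inter> {z. orthogonal x z} \<subseteq> span B"
  shows "S \<subseteq> span (insert x B)"
proof
  fix z assume "z \<in> S"
  then have "z - (x \<bullet> z) *\<^sub>R x \<in> S \<inter> {z. orthogonal x z}"
    using assms(1-3) by (simp add: orthogonal_def subspace_diff subspace_scale inner_diff_right)
  then have "z - (x \<bullet> z) *\<^sub>R x \<in> span (insert x B)"
    using assms(4) span_mono[of B "insert x B"] by auto
  moreover have "(x \<bullet> z) *\<^sub>R x \<in> span (insert x B)" by (simp add: span_base span_scale)
  ultimately show "z \<in> span (insert x B)" using span_add by fastforce
qed

lemma invariant_subspace_orthonormal_eigenvectors: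
  fixes H :: "real^'n^'n"
  assumes sym: "transpose H = H"
  shows "subspace S \<Longrightarrow> \<forall>z\<in>S. H *v z \<in> S \<Longrightarrow> \<exists>B. finite B \<and> B \<subseteq> S \<and> pairwise orthogonal B \<and>
     (\<forall>b\<in>B. norm b = 1 \<and> H *v b = (b \<bullet> (H *v b)) *\<^sub>R b) \<and> S \<subseteq> span B"
proof (induction "dim S" arbitrary: S rule: less_induct)
  case less
  show ?case
  proof (cases "S = {0}")
    case True
    then show ?thesis by (intro exI[of _ "{}"]) auto
  next
    case False
    then obtain x where xS: "x \<in> S" and nx: "norm x = 1" and Hx: "H *v x = (x \<bullet> (H *v x)) *\<^sub>R x"
      using invariant_subspace_has_unit_eigenvector[OF sym less.prems] by blast
    have xx: "x \<bullet> x = 1" using nx by (simp add: norm_eq_sqrt_inner)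
    define S' where "S' = S \<inter> {z. orthogonal x z}"
    have sS': "subspace S'" unfolding S'_def
      using less.prems(1) subspace_orthogonal_to_vector[of x] by (intro subspace_inter) auto
    have invS': "\<forall>z\<in>S'. H *v z \<in> S'"
    proof
      fix z assume "z \<in> S'"
      then have "z \<in> S" "x \<bullet> z = 0" by (auto simp: S'_def orthogonal_def)
      moreover have "x \<bullet> (H *v z) = (x \<bullet> (H *v x)) * (x \<bullet> z)"
        using symmetric_matrix_inner_swap[OF sym, of x z] Hx inner_scaleR_left by metis
      ultimately show "H *v z \<in> S'" using less.prems(2) by (simp add: S'_def orthogonal_def)
    qed
    have "x \<notin> S'" using xx by (auto simp: S'_def orthogonal_def)
    then have "S' \<subset> S" using xS by (auto simp: S'_def)
    then have "dim S' < dim S" using sS' less.prems(1) by (metis dim_psubset span_eq_iff)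
    from less.hyps[OF this sS' invS'] obtain B' where B': "finite B'" "B' \<subseteq> S'" "pairwise orthogonal B'"
      "\<forall>b\<in>B'. norm b = 1 \<and> H *v b = (b \<bullet> (H *v b)) *\<^sub>R b" "S' \<subseteq> span B'" by blast
    have "S \<subseteq> span (insert x B')"
      using subspace_subset_span_insert[OF less.prems(1) xS xx] B'(5) by (simp add: S'_def)
    moreover have "pairwise orthogonal (insert x B')"
      using B'(2,3) by (auto simp: pairwise_insert S'_def orthogonal_commute)
    ultimately show ?thesis
      using B' xS nx Hx by (intro exI[of _ "insert x B'"]) (auto simp: S'_def)
  qed
qed

text \<open>The expansion is stated as \<open>\<Sum> = v\<close> rather than \<open>v = \<Sum>\<close> so that it is usable as a rewrite rule.\<close>
definition orthonormal_eigenbasis :: "real^'n^'n \<Rightarrow> (real^'n) set \<Rightarrow> bool" where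
  "orthonormal_eigenbasis H B \<longleftrightarrow> finite B \<and> pairwise orthogonal B \<and>
     (\<forall>b\<in>B. norm b = 1 \<and> H *v b = (b \<bullet> (H *v b)) *\<^sub>R b) \<and> (\<forall>v. (\<Sum>b\<in>B. (v \<bullet> b) *\<^sub>R b) = v)"

lemma orthonormal_inner_sum_left:
  fixes B :: "(real^'n) set"
  assumes "finite B" "pairwise orthogonal B" "\<forall>b\<in>B. norm b = 1" "b0 \<in> B"
  shows "(\<Sum>b\<in>B. f b *\<^sub>R b) \<bullet> b0 = f b0"
proof -
  have "(\<Sum>b\<in>B. f b *\<^sub>R b) \<bullet> b0 = (\<Sum>b\<in>B. if b = b0 then f b else 0)"
    unfolding inner_sum_left
  proof (rule sum.cong)
    fix b assume "b \<in> B"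
    then have "b \<bullet> b0 = (if b = b0 then 1 else 0)"
      using assms(2-4) by (auto simp: pairwise_def orthogonal_def norm_eq_sqrt_inner)
    then show "(f b *\<^sub>R b) \<bullet> b0 = (if b = b0 then f b else 0)" by simp
  qed simp
  then show ?thesis using assms(1,4) by (simp add: sum.delta')
qed

lemma orthonormal_inner_sums:
  fixes B :: "(real^'n) set"
  assumes "finite B" "pairwise orthogonal B" "\<forall>b\<in>B. norm b = 1"
  shows "(\<Sum>b\<in>B. f b *\<^sub>R b) \<bullet> (\<Sum>b\<in>B. g b *\<^sub>R b) = (\<Sum>b\<in>B. f b * g b)"
  unfolding inner_sum_right using orthonormal_inner_sum_left[OF assms]
  by (auto intro: sum.cong simp: mult.commute)

lemma symmetric_matrix_orthonormal_eigenbasis: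
  fixes H :: "real^'n^'n"
  assumes "transpose H = H"
  obtains B where "orthonormal_eigenbasis H B"
proof -
  obtain B where B: "finite B" "pairwise orthogonal B"
    "\<forall>b\<in>B. norm b = 1 \<and> H *v b = (b \<bullet> (H *v b)) *\<^sub>R b" "UNIV \<subseteq> span B"
    using invariant_subspace_orthonormal_eigenvectors[OF assms, of UNIV] by auto
  have "(\<Sum>b\<in>B. (v \<bullet> b) *\<^sub>R b) = v" for v
  proof -
    obtain c where c: "v = (\<Sum>b\<in>B. c b *\<^sub>R b)" using B(4) span_finite[OF B(1)] by auto
    have "v \<bullet> b = c b" if "b \<in> B" for b
      unfolding c using orthonormal_inner_sum_left[OF B(1,2) _ that, of c] B(3) by auto
    then show ?thesis by (subst (2) c) (auto intro: sum.cong)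
  qed
  with B that show ?thesis unfolding orthonormal_eigenbasis_def by blast
qed

lemma orthonormal_eigenbasisD:
  assumes "orthonormal_eigenbasis H B"
  shows "finite B" "pairwise orthogonal B" "\<And>b. b \<in> B \<Longrightarrow> norm b = 1"
    "\<And>b. b \<in> B \<Longrightarrow> H *v b = (b \<bullet> (H *v b)) *\<^sub>R b" "\<And>v. (\<Sum>b\<in>B. (v \<bullet> b) *\<^sub>R b) = v"
  using assms unfolding orthonormal_eigenbasis_def by blast+

lemma orthonormal_eigenbasis_eigenvalue_le:
  fixes H :: "real^'n^'n"
  assumes sym: "transpose H = H" and B: "orthonormal_eigenbasis H B" and "e \<in> B"
  shows "e \<bullet> (H *v e) \<le> largest_eigenvalue H"
proof -
  define lam where "lam e = e \<bullet> (H *v e)" for e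
  have Hb: "H *v b = lam b *\<^sub>R b" if "b \<in> B" for b
    using orthonormal_eigenbasisD(4)[OF B that] by (simp add: lam_def)
  define E where "E = {c. \<exists>v. v \<noteq> 0 \<and> H *v v = c *\<^sub>R v}"
  have "E \<subseteq> lam ` B"
  proof
    fix c assume "c \<in> E"
    then obtain v where v: "v \<noteq> 0" "H *v v = c *\<^sub>R v" by (auto simp: E_def)
    have "\<exists>b\<in>B. v \<bullet> b \<noteq> 0"
    proof (rule ccontr)
      assume "\<not> (\<exists>b\<in>B. v \<bullet> b \<noteq> 0)"
      then have "(\<Sum>b\<in>B. (v \<bullet> b) *\<^sub>R b) = 0" by simp
      then show False using v(1) by (simp add: orthonormal_eigenbasisD(5)[OF B])
    qed
    then obtain b where b: "b \<in> B" "v \<bullet> b \<noteq> 0" by blast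
    have "c * (v \<bullet> b) = (H *v v) \<bullet> b" using v by simp
    also have "\<dots> = lam b * (v \<bullet> b)"
      using symmetric_matrix_inner_swap[OF sym, of v b] Hb[OF b(1)] by simp
    finally have "c = lam b" using b(2) by simp
    then show "c \<in> lam ` B" using b by auto
  qed
  then have "finite E" using orthonormal_eigenbasisD(1)[OF B] finite_surj by blast
  moreover have "e \<noteq> 0" using orthonormal_eigenbasisD(3)[OF B \<open>e \<in> B\<close>] by auto
  then have "lam e \<in> E" using Hb[OF \<open>e \<in> B\<close>] unfolding E_def by blast
  ultimately show ?thesis by (simp add: largest_eigenvalue_def E_def lam_def)
qed

lemma quadratic_form_le_if_diagonal:
  fixes H :: "real^'n^'n" and u :: "real^'n \<Rightarrow> real^'n"
  assumes B: "orthonormal_eigenbasis H B" and lin: "linear u"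
    and diag: "\<And>b. b \<in> B \<Longrightarrow> u b = \<sigma> b *\<^sub>R b"
    and K: "\<And>b. b \<in> B \<Longrightarrow> (b \<bullet> (H *v b)) * (\<sigma> b)\<^sup>2 \<le> K"
  shows "u v \<bullet> (H *v u v) \<le> K * (v \<bullet> v)"
proof -
  note fin = orthonormal_eigenbasisD(1)[OF B] and orth = orthonormal_eigenbasisD(2)[OF B]
  have nb: "\<forall>b\<in>B. norm b = 1" using orthonormal_eigenbasisD(3)[OF B] by blast
  define lam where "lam b = b \<bullet> (H *v b)" for b
  have Hb: "H *v b = lam b *\<^sub>R b" if "b \<in> B" for b
    using orthonormal_eigenbasisD(4)[OF B that] by (simp add: lam_def)
  have uv: "u v = (\<Sum>b\<in>B. ((v \<bullet> b) * \<sigma> b) *\<^sub>R b)"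
    by (subst (1) orthonormal_eigenbasisD(5)[OF B, symmetric])
      (simp add: linear_sum[OF lin] linear_scale[OF lin] diag)
  have Huv: "H *v u v = (\<Sum>b\<in>B. ((v \<bullet> b) * \<sigma> b * lam b) *\<^sub>R b)"
    unfolding uv linear_sum[OF matrix_vector_mul_linear]
    by (intro sum.cong) (simp_all add: matrix_vector_mult_scaleR Hb)
  have "u v \<bullet> (H *v u v) = (\<Sum>b\<in>B. (v \<bullet> b)\<^sup>2 * (lam b * (\<sigma> b)\<^sup>2))"
    unfolding Huv by (simp add: uv orthonormal_inner_sums[OF fin orth nb] power2_eq_square mult_ac)
  also have "\<dots> \<le> (\<Sum>b\<in>B. (v \<bullet> b)\<^sup>2 * K)"
    by (rule sum_mono) (auto intro: mult_left_mono K simp: lam_def)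
  also have "\<dots> = K * (v \<bullet> v)"
    using orthonormal_inner_sums[OF fin orth nb, of "\<lambda>b. v \<bullet> b" "\<lambda>b. v \<bullet> b"]
    by (simp add: orthonormal_eigenbasisD(5)[OF B] power2_eq_square sum_distrib_left mult.commute)
  finally show ?thesis .
qed

section \<open>The propagator of the homogeneous recursion\<close>

fun propagator :: "real^'n^'n \<Rightarrow> real \<Rightarrow> real \<Rightarrow> nat \<Rightarrow> real^'n \<Rightarrow> real^'n" where
  "propagator H a b 0 v = 0"
| "propagator H a b (Suc 0) v = v"
| "propagator H a b (Suc (Suc m)) v = 2 *\<^sub>R propagator H a b (Suc m) v - propagator H a b m v
     - (a + b) *\<^sub>R (H *v propagator H a b (Suc m) v) + b *\<^sub>R (H *v propagator H a b m v)"

lemma linear_propagator: "linear (propagator H a b m)"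
proof -
  have "propagator H a b m (x + y) = propagator H a b m x + propagator H a b m y \<and>
        propagator H a b m (c *\<^sub>R x) = c *\<^sub>R propagator H a b m x" for x y c
    by (induction H a b m x rule: propagator.induct)
      (simp_all add: algebra_simps matrix_vector_mult_scaleR)
  then show ?thesis by (simp add: linearI)
qed

lemma propagator_eigenvector:
  assumes "H *v w = l *\<^sub>R w"
  shows "propagator H a b m w = mode_seq (a * l) (b * l) m *\<^sub>R w"
proof -
  have "propagator H a b m w = mode_seq (a * l) (b * l) m *\<^sub>R w \<and>
        propagator H a b (Suc m) w = mode_seq (a * l) (b * l) (Suc m) *\<^sub>R w"
    by (induction m) (simp_all add: matrix_vector_mult_scaleR assms algebra_simps)
  then show ?thesis ..
qed

lemma propagator_quadratic_form_le:
  fixes H :: "real^'n^'n"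
  assumes sym: "transpose H = H" and pd: "\<And>x. x \<noteq> 0 \<Longrightarrow> x \<bullet> (H *v x) > 0"
    and K: "\<And>l. 0 < l \<Longrightarrow> l \<le> largest_eigenvalue H \<Longrightarrow> l * (mode_seq (a * l) (b * l) m)\<^sup>2 \<le> K"
  shows "propagator H a b m v \<bullet> (H *v propagator H a b m v) \<le> K * (v \<bullet> v)"
proof -
  obtain B where B: "orthonormal_eigenbasis H B"
    using symmetric_matrix_orthonormal_eigenbasis[OF sym] by blast
  show ?thesis
  proof (rule quadratic_form_le_if_diagonal[OF B linear_propagator])
    fix e assume "e \<in> B"
    then have e: "e \<noteq> 0" "H *v e = (e \<bullet> (H *v e)) *\<^sub>R e"
      using orthonormal_eigenbasisD(3,4)[OF B] by force+
    then show "propagator H a b m e = mode_seq (a * (e \<bullet> (H *v e))) (b * (e \<bullet> (H *v e))) m *\<^sub>R e"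
      by (intro propagator_eigenvector)
    show "(e \<bullet> (H *v e)) * (mode_seq (a * (e \<bullet> (H *v e))) (b * (e \<bullet> (H *v e))) m)\<^sup>2 \<le> K"
      using e(1) pd orthonormal_eigenbasis_eigenvalue_le[OF sym B \<open>e \<in> B\<close>] by (intro K) auto
  qed
qed

lemma scaled_step_sizes:
  fixes l L \<alpha> \<beta> :: real
  assumes "0 < l" "l \<le> L" "0 \<le> \<alpha>" "0 \<le> \<beta>" "\<beta> \<le> 2 / L - \<alpha>"
  shows "0 \<le> \<alpha> * l" "0 \<le> \<beta> * l" "\<alpha> * l + \<beta> * l \<le> 2"
proof -
  have "(\<alpha> + \<beta>) * l \<le> (2 / L) * L"
    using assms by (intro mult_mono) simp_all
  then show "\<alpha> * l + \<beta> * l \<le> 2"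
    using assms(1,2) by (simp add: distrib_right)
  show "0 \<le> \<alpha> * l" "0 \<le> \<beta> * l" using assms by simp_all
qed

lemma propagator_quadratic_form_le_const:
  fixes H :: "real^'n^'n"
  assumes sym: "transpose H = H" and pd: "\<And>x. x \<noteq> 0 \<Longrightarrow> x \<bullet> (H *v x) > 0"
    and "0 < \<alpha>" "0 \<le> \<beta>" "\<beta> \<le> 2 / largest_eigenvalue H - \<alpha>"
  shows "propagator H \<alpha> \<beta> m v \<bullet> (H *v propagator H \<alpha> \<beta> m v) \<le> (2 / \<alpha>) * (v \<bullet> v)"
proof (rule propagator_quadratic_form_le[OF sym pd])
  fix l :: real assume "0 < l" "l \<le> largest_eigenvalue H"
  note range = scaled_step_sizes[OF this, of \<alpha> \<beta>]
  have "\<alpha> * (l * (mode_seq (\<alpha> * l) (\<beta> * l) m)\<^sup>2) \<le> 2"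
    using mode_seq_sq_le_const[OF range] assms by (simp add: mult.assoc)
  then show "l * (mode_seq (\<alpha> * l) (\<beta> * l) m)\<^sup>2 \<le> 2 / \<alpha>"
    using \<open>0 < \<alpha>\<close> by (simp add: field_simps)
qed

lemma propagator_quadratic_form_le_linear:
  fixes H :: "real^'n^'n"
  assumes sym: "transpose H = H" and pd: "\<And>x. x \<noteq> 0 \<Longrightarrow> x \<bullet> (H *v x) > 0"
    and "0 \<le> \<alpha>" "0 \<le> \<beta>" "\<beta> \<le> 2 / largest_eigenvalue H - \<alpha>" "0 < \<alpha> + \<beta>"
  shows "propagator H \<alpha> \<beta> m v \<bullet> (H *v propagator H \<alpha> \<beta> m v) \<le> (2 * real m / (\<alpha> + \<beta>)) * (v \<bullet> v)"
proof (rule propagator_quadratic_form_le[OF sym pd])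
  fix l :: real assume "0 < l" "l \<le> largest_eigenvalue H"
  note range = scaled_step_sizes[OF this, of \<alpha> \<beta>]
  have "(\<alpha> + \<beta>) * (l * (mode_seq (\<alpha> * l) (\<beta> * l) m)\<^sup>2) \<le> 2 * real m"
    using mode_seq_sq_le_linear[OF range] assms by (simp add: algebra_simps)
  then show "l * (mode_seq (\<alpha> * l) (\<beta> * l) m)\<^sup>2 \<le> 2 * real m / (\<alpha> + \<beta>)"
    using \<open>0 < \<alpha> + \<beta>\<close> by (simp add: field_simps)
qed

section \<open>The error recursion of the noisy algorithm\<close>

definition noisy_eta :: "real^'n^'n \<Rightarrow> real^'n \<Rightarrow> real \<Rightarrow> real \<Rightarrow> real^'n
    \<Rightarrow> (nat \<Rightarrow> real^'n) \<Rightarrow> nat \<Rightarrow> real^'n" where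
  "noisy_eta H ts a b th0 e n = real n *\<^sub>R (noisy_theta H ts a b th0 e n - ts)"

lemma noisy_eta_Suc_Suc:
  "noisy_eta H ts a b th0 e (Suc (Suc k)) =
     2 *\<^sub>R noisy_eta H ts a b th0 e (Suc k) - noisy_eta H ts a b th0 e k
     - (a + b) *\<^sub>R (H *v noisy_eta H ts a b th0 e (Suc k)) + b *\<^sub>R (H *v noisy_eta H ts a b th0 e k)
     + (real (Suc k) * a + b) *\<^sub>R e (Suc (Suc k))"
proof -
  define n where "n = real (Suc k)"
  define x1 x0 where "x1 = noisy_theta H ts a b th0 e (Suc k)" and "x0 = noisy_theta H ts a b th0 e k"
  have n1: "n + 1 \<noteq> 0" by (simp add: n_def)
  have step: "(n + 1) *\<^sub>R noisy_theta H ts a b th0 e (Suc (Suc k)) =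
      (2 * n) *\<^sub>R x1 - (n - 1) *\<^sub>R x0 - (n * (a + b)) *\<^sub>R (H *v (x1 - ts))
      + ((n - 1) * b) *\<^sub>R (H *v (x0 - ts)) + (n * a + b) *\<^sub>R e (Suc (Suc k))"
  proof -
    have rec: "noisy_theta H ts a b th0 e (Suc (Suc k)) = (2 * n / (n + 1)) *\<^sub>R x1 - ((n - 1) / (n + 1)) *\<^sub>R x0
       - (1 / (n + 1)) *\<^sub>R ((n * (a + b)) *\<^sub>R (H *v (x1 - ts))
          - ((n - 1) * b) *\<^sub>R (H *v (x0 - ts)) - (n * a + b) *\<^sub>R e (Suc (Suc k)))"
      by (simp add: x1_def x0_def n_def Let_def)
    have cancel: "(n + 1) * (c / (n + 1)) = c" "(n + 1) * (1 / (n + 1) * c) = c" for c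
      using n1 by simp_all
    show ?thesis
      unfolding rec scaleR_right_diff_distrib scaleR_scaleR cancel by (simp add: algebra_simps)
  qed
  have e1: "real (Suc (Suc k)) = n + 1" and e2: "real k = n - 1" by (simp_all add: n_def)
  show ?thesis
    unfolding noisy_eta_def e1 e2 n_def[symmetric] x1_def[symmetric] x0_def[symmetric]
      scaleR_right_diff_distrib[of "n + 1"] step
    by (simp add: matrix_vector_mult_diff_distrib matrix_vector_mult_scaleR algebra_simps vec_eq_iff)
qed

definition forced_response :: "real^'n^'n \<Rightarrow> real \<Rightarrow> real \<Rightarrow> (nat \<Rightarrow> real^'n) \<Rightarrow> nat \<Rightarrow> real^'n"
  where "forced_response H a b f n = (\<Sum>j\<in>{2..n}. propagator H a b (Suc n - j) (f j))"

lemma forced_response_Suc_Suc: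
  "forced_response H a b f (Suc (Suc k)) = 2 *\<^sub>R forced_response H a b f (Suc k) - forced_response H a b f k
     - (a + b) *\<^sub>R (H *v forced_response H a b f (Suc k)) + b *\<^sub>R (H *v forced_response H a b f k)
     + f (Suc (Suc k))"
proof -
  define P where "P m = propagator H a b m" for m
  define S where "S n = forced_response H a b f n" for n
  have recurrence_sum: "(\<Sum>j\<in>A. 2 *\<^sub>R g j - h j - c *\<^sub>R (H *v g j) + d *\<^sub>R (H *v h j))
      = 2 *\<^sub>R sum g A - sum h A - c *\<^sub>R (H *v sum g A) + d *\<^sub>R (H *v sum h A)"
    for A :: "nat set" and g h and c d :: real
    by (simp add: linear_sum[OF matrix_vector_mul_linear] sum.distrib sum_subtractf scaleR_sum_right)
  have "S (Suc (Suc k)) = (\<Sum>j\<in>{2..Suc k}. P (Suc (Suc (Suc k)) - j) (f j)) + f (Suc (Suc k))"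
    by (simp add: S_def P_def forced_response_def)
  also have "(\<Sum>j\<in>{2..Suc k}. P (Suc (Suc (Suc k)) - j) (f j)) =
      (\<Sum>j\<in>{2..Suc k}. 2 *\<^sub>R P (Suc (Suc k) - j) (f j) - P (Suc k - j) (f j)
         - (a + b) *\<^sub>R (H *v P (Suc (Suc k) - j) (f j)) + b *\<^sub>R (H *v P (Suc k - j) (f j)))"
  proof (rule sum.cong)
    fix j assume "j \<in> {2..Suc k}"
    then have "Suc (Suc (Suc k)) - j = Suc (Suc (Suc k - j))" "Suc (Suc k) - j = Suc (Suc k - j)"
      by auto
    then show "P (Suc (Suc (Suc k)) - j) (f j) = 2 *\<^sub>R P (Suc (Suc k) - j) (f j) - P (Suc k - j) (f j)
         - (a + b) *\<^sub>R (H *v P (Suc (Suc k) - j) (f j)) + b *\<^sub>R (H *v P (Suc k - j) (f j))"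
      by (simp add: P_def)
  qed simp
  also have "\<dots> = 2 *\<^sub>R S (Suc k) - (\<Sum>j\<in>{2..Suc k}. P (Suc k - j) (f j))
      - (a + b) *\<^sub>R (H *v S (Suc k)) + b *\<^sub>R (H *v (\<Sum>j\<in>{2..Suc k}. P (Suc k - j) (f j)))"
    unfolding S_def forced_response_def P_def by (rule recurrence_sum)
  also have "(\<Sum>j\<in>{2..Suc k}. P (Suc k - j) (f j)) = S k"
    by (simp add: S_def P_def forced_response_def)
  finally show ?thesis by (simp add: S_def)
qed

lemma propagator_variation_of_constants:
  assumes x0: "x 0 = 0" and x1: "x (Suc 0) = v"
    and rec: "\<And>k. x (Suc (Suc k)) = 2 *\<^sub>R x (Suc k) - x k - (a + b) *\<^sub>R (H *v x (Suc k))
        + b *\<^sub>R (H *v x k) + f (Suc (Suc k))"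
  shows "x n = propagator H a b n v + forced_response H a b f n"
proof -
  have "x n = propagator H a b n v + forced_response H a b f n
      \<and> x (Suc n) = propagator H a b (Suc n) v + forced_response H a b f (Suc n)"
  proof (induction n)
    case 0
    then show ?case by (simp add: x0 x1 forced_response_def)
  next
    case (Suc k)
    then show ?case
      by (simp add: rec forced_response_Suc_Suc algebra_simps matrix_vector_right_distrib)
  qed
  then show ?thesis ..
qed

lemma noisy_eta_closed_form:
  "noisy_eta H ts a b th0 e n = propagator H a b n (th0 - ts)
     + (\<Sum>j\<in>{2..n}. ((real j - 1) * a + b) *\<^sub>R propagator H a b (Suc n - j) (e j))"
proof -
  have "noisy_eta H ts a b th0 e n = propagator H a b n (th0 - ts)
     + forced_response H a b (\<lambda>j. ((real j - 1) * a + b) *\<^sub>R e j) n"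
    by (rule propagator_variation_of_constants)
      (simp add: noisy_eta_def, simp add: noisy_eta_def, subst noisy_eta_Suc_Suc, simp add: algebra_simps)
  then show ?thesis by (simp add: forced_response_def linear_scale[OF linear_propagator])
qed

section \<open>Second moments of random vectors\<close>

lemma inner_linear_eq_sum_components:
  fixes A B :: "real^'n \<Rightarrow> real^'n"
  assumes "linear A" "linear B"
  shows "A x \<bullet> B y = (\<Sum>p\<in>UNIV. \<Sum>r\<in>UNIV. (transpose (matrix A) ** matrix B) $ p $ r * (x $ p * y $ r))"
proof -
  have "A x \<bullet> B y = (matrix A *v x) \<bullet> (matrix B *v y)"
    by (simp add: matrix_works assms)
  also have "\<dots> = x \<bullet> (transpose (matrix A) *v (matrix B *v y))"
    by (metis dot_lmul_matrix vector_transpose_matrix)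
  finally have "A x \<bullet> B y = x \<bullet> ((transpose (matrix A) ** matrix B) *v y)"
    by (simp add: matrix_vector_mul_assoc)
  then show ?thesis
    by (simp add: inner_vec_def matrix_vector_mult_def sum_distrib_left algebra_simps)
qed

lemma quadratic_form_add_sum:
  fixes H :: "real^'n^'n"
  assumes "transpose H = H"
  shows "(D + (\<Sum>j\<in>J. Z j)) \<bullet> (H *v (D + (\<Sum>j\<in>J. Z j))) = D \<bullet> (H *v D)
     + (\<Sum>j\<in>J. 2 * (D \<bullet> (H *v Z j))) + (\<Sum>j\<in>J. \<Sum>l\<in>J. Z j \<bullet> (H *v Z l))"
proof -
  have swap: "Z j \<bullet> (H *v D) = D \<bullet> (H *v Z j)" for j
    using symmetric_matrix_inner_swap[OF assms, of "Z j" D] by (simp add: inner_commute)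
  show ?thesis
    by (simp add: matrix_vector_right_distrib linear_sum[OF matrix_vector_mul_linear] inner_add_left
        inner_add_right inner_sum_left inner_sum_right swap sum.distrib algebra_simps sum_distrib_left)
      (rule sum.swap)
qed

context prob_space
begin

lemma integrable_L2:
  fixes X :: "'a \<Rightarrow> 'b::{banach, second_countable_topology}"
  assumes "X \<in> borel_measurable M" "integrable M (\<lambda>\<omega>. (norm (X \<omega>))\<^sup>2)"
  shows "integrable M X"
  using square_integrable_imp_integrable[of "\<lambda>\<omega>. norm (X \<omega>)"] assms integrable_norm_iff by auto

lemma integrable_component_products_L2:
  fixes X Y :: "'a \<Rightarrow> real^'n"
  assumes X: "X \<in> borel_measurable M" "integrable M (\<lambda>\<omega>. (norm (X \<omega>))\<^sup>2)"
    and Y: "Y \<in> borel_measurable M" "integrable M (\<lambda>\<omega>. (norm (Y \<omega>))\<^sup>2)"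
  shows "integrable M (\<lambda>\<omega>. X \<omega> $ p * Y \<omega> $ r)"
proof (rule Bochner_Integration.integrable_bound)
  show "integrable M (\<lambda>\<omega>. (norm (X \<omega>))\<^sup>2 + (norm (Y \<omega>))\<^sup>2)" using X Y by simp
  show "(\<lambda>\<omega>. X \<omega> $ p * Y \<omega> $ r) \<in> borel_measurable M"
    using measurable_compose[OF X(1) borel_measurable_nth] measurable_compose[OF Y(1) borel_measurable_nth]
    by simp
  show "AE \<omega> in M. norm (X \<omega> $ p * Y \<omega> $ r) \<le> norm ((norm (X \<omega>))\<^sup>2 + (norm (Y \<omega>))\<^sup>2)"
  proof (rule AE_I2)
    fix \<omega>
    have "\<bar>X \<omega> $ p\<bar> \<le> norm (X \<omega>)" "\<bar>Y \<omega> $ r\<bar> \<le> norm (Y \<omega>)"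
      using component_le_norm_cart by (metis real_norm_def)+
    then have "(X \<omega> $ p)\<^sup>2 \<le> (norm (X \<omega>))\<^sup>2" "(Y \<omega> $ r)\<^sup>2 \<le> (norm (Y \<omega>))\<^sup>2"
      by (simp_all add: abs_le_square_iff[symmetric])
    moreover have "\<bar>X \<omega> $ p * Y \<omega> $ r\<bar> \<le> (X \<omega> $ p)\<^sup>2 + (Y \<omega> $ r)\<^sup>2"
    proof -
      have "2 * \<bar>X \<omega> $ p * Y \<omega> $ r\<bar> \<le> (X \<omega> $ p)\<^sup>2 + (Y \<omega> $ r)\<^sup>2"
        using sum_squares_bound[of "\<bar>X \<omega> $ p\<bar>" "\<bar>Y \<omega> $ r\<bar>"] by (simp add: abs_mult mult.assoc)
      then show ?thesis by linarith
    qed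
    ultimately show "norm (X \<omega> $ p * Y \<omega> $ r) \<le> norm ((norm (X \<omega>))\<^sup>2 + (norm (Y \<omega>))\<^sup>2)"
      by simp
  qed
qed

lemma integrable_inner_linear_L2:
  fixes X Y :: "'a \<Rightarrow> real^'n" and A B :: "real^'n \<Rightarrow> real^'n"
  assumes "linear A" "linear B"
    and "X \<in> borel_measurable M" "integrable M (\<lambda>\<omega>. (norm (X \<omega>))\<^sup>2)"
    and "Y \<in> borel_measurable M" "integrable M (\<lambda>\<omega>. (norm (Y \<omega>))\<^sup>2)"
  shows "integrable M (\<lambda>\<omega>. A (X \<omega>) \<bullet> B (Y \<omega>))"
  unfolding inner_linear_eq_sum_components[OF assms(1,2)]
  using integrable_component_products_L2[OF assms(3-6)] by auto

lemma expectation_inner_linear_uncorrelated: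
  fixes X Y :: "'a \<Rightarrow> real^'n" and A B :: "real^'n \<Rightarrow> real^'n"
  assumes "linear A" "linear B"
    and "X \<in> borel_measurable M" "integrable M (\<lambda>\<omega>. (norm (X \<omega>))\<^sup>2)"
    and "Y \<in> borel_measurable M" "integrable M (\<lambda>\<omega>. (norm (Y \<omega>))\<^sup>2)"
    and uncorr: "\<And>p r. expectation (\<lambda>\<omega>. X \<omega> $ p * Y \<omega> $ r) = 0"
  shows "expectation (\<lambda>\<omega>. A (X \<omega>) \<bullet> B (Y \<omega>)) = 0"
  unfolding inner_linear_eq_sum_components[OF assms(1,2)]
  using integrable_component_products_L2[OF assms(3-6)] uncorr by simp

lemma expectation_inner_linear_mean_zero:
  fixes X :: "'a \<Rightarrow> real^'n" and A :: "real^'n \<Rightarrow> real^'n"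
  assumes "linear A" "integrable M X" "expectation X = 0"
  shows "integrable M (\<lambda>\<omega>. D \<bullet> A (X \<omega>))" "expectation (\<lambda>\<omega>. D \<bullet> A (X \<omega>)) = 0"
proof -
  have T: "bounded_linear (\<lambda>x. D \<bullet> A x)"
    using assms(1) by (intro bounded_linear_compose[OF bounded_linear_inner_right])
      (simp add: linear_conv_bounded_linear)
  show "integrable M (\<lambda>\<omega>. D \<bullet> A (X \<omega>))"
    by (rule integrable_bounded_linear[OF T assms(2)])
  from integral_bounded_linear[OF T assms(2)] show "expectation (\<lambda>\<omega>. D \<bullet> A (X \<omega>)) = 0"
    using assms(1,3) by (simp add: linear_0)
qed

lemma expectation_inner_self:
  fixes X :: "'a \<Rightarrow> real^'n"
  assumes "X \<in> borel_measurable M" "integrable M (\<lambda>\<omega>. (norm (X \<omega>))\<^sup>2)"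
    and cov: "\<And>p. expectation (\<lambda>\<omega>. X \<omega> $ p * X \<omega> $ p) = C $ p $ p"
  shows "expectation (\<lambda>\<omega>. X \<omega> \<bullet> X \<omega>) = trace C"
  unfolding inner_vec_def trace_def
  using integrable_component_products_L2[OF assms(1,2,1,2)] cov by simp

lemma expectation_quadratic_uncorrelated_sum:
  fixes X :: "'i \<Rightarrow> 'a \<Rightarrow> real^'n" and A :: "'i \<Rightarrow> real^'n \<Rightarrow> real^'n" and H :: "real^'n^'n"
  assumes "finite J" and sym: "transpose H = H"
    and lin: "\<And>j. j \<in> J \<Longrightarrow> linear (A j)"
    and meas: "\<And>j. j \<in> J \<Longrightarrow> X j \<in> borel_measurable M"
    and L2: "\<And>j. j \<in> J \<Longrightarrow> integrable M (\<lambda>\<omega>. (norm (X j \<omega>))\<^sup>2)"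
    and mean: "\<And>j. j \<in> J \<Longrightarrow> expectation (X j) = 0"
    and uncorr: "\<And>j l p r. j \<in> J \<Longrightarrow> l \<in> J \<Longrightarrow> j \<noteq> l \<Longrightarrow>
      expectation (\<lambda>\<omega>. X j \<omega> $ p * X l \<omega> $ r) = 0"
  shows "integrable M (\<lambda>\<omega>. (D + (\<Sum>j\<in>J. A j (X j \<omega>))) \<bullet> (H *v (D + (\<Sum>j\<in>J. A j (X j \<omega>)))))"
    and "expectation (\<lambda>\<omega>. (D + (\<Sum>j\<in>J. A j (X j \<omega>))) \<bullet> (H *v (D + (\<Sum>j\<in>J. A j (X j \<omega>)))))
    = D \<bullet> (H *v D) + (\<Sum>j\<in>J. expectation (\<lambda>\<omega>. A j (X j \<omega>) \<bullet> (H *v A j (X j \<omega>))))"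
proof -
  have linH: "linear (\<lambda>x. H *v A j x)" if "j \<in> J" for j
    using lin[OF that] by (intro linear_compose[unfolded o_def, OF _ matrix_vector_mul_linear])
  have lin_mean: "integrable M (\<lambda>\<omega>. D \<bullet> (H *v A j (X j \<omega>)))"
    "expectation (\<lambda>\<omega>. D \<bullet> (H *v A j (X j \<omega>))) = 0" if "j \<in> J" for j
    using expectation_inner_linear_mean_zero[OF linH integrable_L2[OF meas L2] mean] that by blast+
  have cross: "integrable M (\<lambda>\<omega>. A j (X j \<omega>) \<bullet> (H *v A l (X l \<omega>)))" if "j \<in> J" "l \<in> J" for j l
    using integrable_inner_linear_L2[OF lin linH meas L2 meas L2] that by blast
  have cross_zero: "expectation (\<lambda>\<omega>. A j (X j \<omega>) \<bullet> (H *v A l (X l \<omega>))) = 0"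
    if "j \<in> J" "l \<in> J" "j \<noteq> l" for j l
    using expectation_inner_linear_uncorrelated[OF lin linH meas L2 meas L2 uncorr] that by blast
  show "integrable M (\<lambda>\<omega>. (D + (\<Sum>j\<in>J. A j (X j \<omega>))) \<bullet> (H *v (D + (\<Sum>j\<in>J. A j (X j \<omega>)))))"
    unfolding quadratic_form_add_sum[OF sym] using lin_mean(1) cross by simp
  have "expectation (\<lambda>\<omega>. (D + (\<Sum>j\<in>J. A j (X j \<omega>))) \<bullet> (H *v (D + (\<Sum>j\<in>J. A j (X j \<omega>)))))
    = D \<bullet> (H *v D) + (\<Sum>j\<in>J. 2 * expectation (\<lambda>\<omega>. D \<bullet> (H *v A j (X j \<omega>))))
      + (\<Sum>j\<in>J. \<Sum>l\<in>J. expectation (\<lambda>\<omega>. A j (X j \<omega>) \<bullet> (H *v A l (X l \<omega>))))"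
    unfolding quadratic_form_add_sum[OF sym] using lin_mean(1) cross
    by (simp add: Bochner_Integration.integral_sum Bochner_Integration.integral_add prob_space)
  also have "\<dots> = D \<bullet> (H *v D) + (\<Sum>j\<in>J. expectation (\<lambda>\<omega>. A j (X j \<omega>) \<bullet> (H *v A j (X j \<omega>))))"
  proof -
    have "(\<Sum>l\<in>J. expectation (\<lambda>\<omega>. A j (X j \<omega>) \<bullet> (H *v A l (X l \<omega>))))
        = expectation (\<lambda>\<omega>. A j (X j \<omega>) \<bullet> (H *v A j (X j \<omega>)))" if "j \<in> J" for j
      using cross_zero[OF that] that \<open>finite J\<close>
      by (subst sum.remove[of _ j]) (auto intro: sum.neutral)
    then show ?thesis using lin_mean(2) by simp
  qed
  finally show "expectation (\<lambda>\<omega>. (D + (\<Sum>j\<in>J. A j (X j \<omega>))) \<bullet> (H *v (D + (\<Sum>j\<in>J. A j (X j \<omega>)))))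
    = D \<bullet> (H *v D) + (\<Sum>j\<in>J. expectation (\<lambda>\<omega>. A j (X j \<omega>) \<bullet> (H *v A j (X j \<omega>))))" .
qed

lemma expectation_quadratic_form_le:
  fixes X :: "'a \<Rightarrow> real^'n" and A :: "real^'n \<Rightarrow> real^'n" and H :: "real^'n^'n"
  assumes "linear A" "X \<in> borel_measurable M" "integrable M (\<lambda>\<omega>. (norm (X \<omega>))\<^sup>2)"
    and bound: "\<And>v. A v \<bullet> (H *v A v) \<le> K * (v \<bullet> v)"
  shows "expectation (\<lambda>\<omega>. A (X \<omega>) \<bullet> (H *v A (X \<omega>))) \<le> K * expectation (\<lambda>\<omega>. X \<omega> \<bullet> X \<omega>)"
proof -
  have "linear (\<lambda>x. H *v A x)"
    using assms(1) by (intro linear_compose[unfolded o_def, OF _ matrix_vector_mul_linear])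
  then have "integrable M (\<lambda>\<omega>. A (X \<omega>) \<bullet> (H *v A (X \<omega>)))"
    using integrable_inner_linear_L2[OF assms(1) _ assms(2,3,2,3)] by blast
  moreover have "integrable M (\<lambda>\<omega>. K * (X \<omega> \<bullet> X \<omega>))"
    using assms(3) by (simp add: power2_norm_eq_inner)
  ultimately have "expectation (\<lambda>\<omega>. A (X \<omega>) \<bullet> (H *v A (X \<omega>))) \<le> expectation (\<lambda>\<omega>. K * (X \<omega> \<bullet> X \<omega>))"
    using bound by (rule integral_mono)
  then show ?thesis by simp
qed

end

section \<open>Expected excess of the noisy algorithm\<close>

lemma pos_def_matrix_inv_right:
  fixes H :: "real^'n^'n"
  assumes pd: "\<And>x. x \<noteq> 0 \<Longrightarrow> x \<bullet> (H *v x) > 0"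
  shows "H *v (matrix_inv H *v q) = q"
proof -
  have "inj ((*v) H)"
  proof (rule injI)
    fix u v assume "H *v u = H *v v"
    then have "(u - v) \<bullet> (H *v (u - v)) = 0" by (simp add: matrix_vector_mult_diff_distrib)
    then show "u = v" using pd[of "u - v"] by (cases "u - v = 0") auto
  qed
  then have "invertible H" using matrix_left_invertible_injective invertible_left_inverse by blast
  then have "H ** matrix_inv H = mat 1"
    unfolding invertible_def matrix_inv_def
    by (rule someI_ex[where P="\<lambda>A'. H ** A' = mat 1 \<and> A' ** H = mat 1", THEN conjunct1])
  then show ?thesis by (simp add: matrix_vector_mul_assoc)
qed

lemma quad_obj_excess:
  fixes H :: "real^'n^'n" and q y :: "real^'n"
  assumes sym: "transpose H = H" and pd: "\<And>x. x \<noteq> 0 \<Longrightarrow> x \<bullet> (H *v x) > 0"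
  defines "ts \<equiv> matrix_inv H *v q"
  shows "quad_obj H q y - quad_obj H q ts = (1/2) * ((y - ts) \<bullet> (H *v (y - ts)))"
proof -
  have Hts: "H *v ts = q" unfolding ts_def by (rule pos_def_matrix_inv_right[OF pd])
  have "ts \<bullet> (H *v y) = y \<bullet> q"
    using symmetric_matrix_inner_swap[OF sym, of ts y] Hts by (simp add: inner_commute)
  then show ?thesis unfolding quad_obj_def
    by (simp add: inner_diff_left inner_diff_right matrix_vector_mult_diff_distrib Hts algebra_simps
        inner_commute)
qed

locale noisy_gradient = prob_space M for M :: "'w measure" +
  fixes H C :: "real^'d^'d" and \<epsilon> :: "nat \<Rightarrow> 'w \<Rightarrow> real^'d"
  assumes H_sym: "transpose H = H"
    and H_pd: "\<And>x. x \<noteq> 0 \<Longrightarrow> x \<bullet> (H *v x) > 0"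
    and eps_meas: "\<And>n. n \<ge> 2 \<Longrightarrow> \<epsilon> n \<in> borel_measurable M"
    and eps_L2: "\<And>n. n \<ge> 2 \<Longrightarrow> integrable M (\<lambda>\<omega>. (norm (\<epsilon> n \<omega>))\<^sup>2)"
    and eps_mean: "\<And>n. n \<ge> 2 \<Longrightarrow> expectation (\<epsilon> n) = 0"
    and eps_uncorr: "\<And>n m i j. n \<ge> 2 \<Longrightarrow> m \<ge> 2 \<Longrightarrow> n \<noteq> m \<Longrightarrow>
          expectation (\<lambda>\<omega>. \<epsilon> n \<omega> $ i * \<epsilon> m \<omega> $ j) = 0"
    and eps_cov: "\<And>n i j. n \<ge> 2 \<Longrightarrow> expectation (\<lambda>\<omega>. \<epsilon> n \<omega> $ i * \<epsilon> n \<omega> $ j) = C $ i $ j"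
begin

lemma expectation_noise_sq: "n \<ge> 2 \<Longrightarrow> expectation (\<lambda>\<omega>. \<epsilon> n \<omega> \<bullet> \<epsilon> n \<omega>) = trace C"
  using eps_cov by (intro expectation_inner_self eps_meas eps_L2)

lemma trace_noise_cov_nonneg: "0 \<le> trace C"
proof -
  have "0 \<le> expectation (\<lambda>\<omega>. \<epsilon> 2 \<omega> \<bullet> \<epsilon> 2 \<omega>)" by (rule integral_nonneg_AE) simp
  then show ?thesis by (simp add: expectation_noise_sq)
qed

lemma expectation_noisy_eta_quadratic:
  fixes ts \<theta>0 :: "real^'d" and \<alpha> \<beta> :: real and N :: nat
  defines "eta \<equiv> \<lambda>\<omega>. noisy_eta H ts \<alpha> \<beta> \<theta>0 (\<lambda>n. \<epsilon> n \<omega>) N"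
    and "Z \<equiv> \<lambda>j \<omega>. ((real j - 1) * \<alpha> + \<beta>) *\<^sub>R propagator H \<alpha> \<beta> (Suc N - j) (\<epsilon> j \<omega>)"
    and "D \<equiv> propagator H \<alpha> \<beta> N (\<theta>0 - ts)"
  shows "integrable M (\<lambda>\<omega>. eta \<omega> \<bullet> (H *v eta \<omega>))"
    and "expectation (\<lambda>\<omega>. eta \<omega> \<bullet> (H *v eta \<omega>))
      = D \<bullet> (H *v D) + (\<Sum>j\<in>{2..N}. expectation (\<lambda>\<omega>. Z j \<omega> \<bullet> (H *v Z j \<omega>)))"
proof -
  define A where "A j = (\<lambda>x. ((real j - 1) * \<alpha> + \<beta>) *\<^sub>R propagator H \<alpha> \<beta> (Suc N - j) x)" for j
  have eta: "eta = (\<lambda>\<omega>. D + (\<Sum>j\<in>{2..N}. A j (\<epsilon> j \<omega>)))"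
    by (simp add: eta_def D_def A_def noisy_eta_closed_form)
  have Z: "Z j \<omega> = A j (\<epsilon> j \<omega>)" for j \<omega> by (simp add: Z_def A_def)
  have linA: "\<And>j. j \<in> {2..N} \<Longrightarrow> linear (A j)"
    unfolding A_def by (intro linear_compose_scale_right linear_propagator)
  have noise: "\<And>j. j \<in> {2..N} \<Longrightarrow> \<epsilon> j \<in> borel_measurable M"
    "\<And>j. j \<in> {2..N} \<Longrightarrow> integrable M (\<lambda>\<omega>. (norm (\<epsilon> j \<omega>))\<^sup>2)"
    "\<And>j. j \<in> {2..N} \<Longrightarrow> expectation (\<epsilon> j) = 0"
    "\<And>j l p r. j \<in> {2..N} \<Longrightarrow> l \<in> {2..N} \<Longrightarrow> j \<noteq> l \<Longrightarrow>
      expectation (\<lambda>\<omega>. \<epsilon> j \<omega> $ p * \<epsilon> l \<omega> $ r) = 0"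
    by (simp_all add: eps_meas eps_L2 eps_mean eps_uncorr)
  note uncorrelated_sum = expectation_quadratic_uncorrelated_sum[where X = \<epsilon> and A = A and D = D,
      OF finite_atLeastAtMost H_sym linA noise]
  show "integrable M (\<lambda>\<omega>. eta \<omega> \<bullet> (H *v eta \<omega>))"
    unfolding eta by (rule uncorrelated_sum(1))
  show "expectation (\<lambda>\<omega>. eta \<omega> \<bullet> (H *v eta \<omega>))
      = D \<bullet> (H *v D) + (\<Sum>j\<in>{2..N}. expectation (\<lambda>\<omega>. Z j \<omega> \<bullet> (H *v Z j \<omega>)))"
    unfolding eta Z by (rule uncorrelated_sum(2))
qed

lemma expectation_noise_term_le:
  fixes \<alpha> \<beta> K :: real
  assumes "2 \<le> j" "j \<le> N" "0 \<le> \<alpha>" "0 \<le> \<beta>" "0 \<le> K"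
    and K: "\<And>m v. m \<le> N \<Longrightarrow> propagator H \<alpha> \<beta> m v \<bullet> (H *v propagator H \<alpha> \<beta> m v) \<le> K * (v \<bullet> v)"
  defines "Z \<equiv> \<lambda>\<omega>. ((real j - 1) * \<alpha> + \<beta>) *\<^sub>R propagator H \<alpha> \<beta> (Suc N - j) (\<epsilon> j \<omega>)"
  shows "expectation (\<lambda>\<omega>. Z \<omega> \<bullet> (H *v Z \<omega>)) \<le> (\<alpha> * real N + \<beta>)\<^sup>2 * K * trace C"
proof -
  define c where "c = (real j - 1) * \<alpha> + \<beta>"
  have "1 \<le> real j" "real j \<le> real N" using assms(1,2) by auto
  then have c: "0 \<le> c" "c \<le> \<alpha> * real N + \<beta>"
    using assms(3,4) mult_right_mono[of "real j - 1" "real N" \<alpha>] by (auto simp: c_def mult.commute)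
  define A where "A = (\<lambda>x. c *\<^sub>R propagator H \<alpha> \<beta> (Suc N - j) x)"
  have "A v \<bullet> (H *v A v) = c\<^sup>2 * (propagator H \<alpha> \<beta> (Suc N - j) v
      \<bullet> (H *v propagator H \<alpha> \<beta> (Suc N - j) v))" for v
    by (simp add: A_def matrix_vector_mult_scaleR power2_eq_square)
  also have "\<dots> v \<le> c\<^sup>2 * (K * (v \<bullet> v))" for v
    using K[of "Suc N - j" v] assms(1) by (intro mult_left_mono) auto
  finally have "A v \<bullet> (H *v A v) \<le> (c\<^sup>2 * K) * (v \<bullet> v)" for v
    by (simp add: mult.assoc)
  moreover have "linear A"
    unfolding A_def by (intro linear_compose_scale_right linear_propagator)
  ultimately have "expectation (\<lambda>\<omega>. Z \<omega> \<bullet> (H *v Z \<omega>)) \<le> c\<^sup>2 * K * trace C"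
    using expectation_quadratic_form_le[of A "\<epsilon> j"] eps_meas eps_L2 expectation_noise_sq assms(1)
    by (simp add: Z_def A_def c_def)
  also have "\<dots> \<le> (\<alpha> * real N + \<beta>)\<^sup>2 * K * trace C"
    using c assms(5) trace_noise_cov_nonneg by (intro mult_right_mono power_mono) auto
  finally show ?thesis .
qed

lemma expected_excess_le:
  fixes q \<theta>0 :: "real^'d" and K \<alpha> \<beta> :: real and N :: nat
  assumes "N \<ge> 1" "0 \<le> \<alpha>" "0 \<le> \<beta>" "0 \<le> K"
    and K: "\<And>m v. m \<le> N \<Longrightarrow> propagator H \<alpha> \<beta> m v \<bullet> (H *v propagator H \<alpha> \<beta> m v) \<le> K * (v \<bullet> v)"
  defines "ts \<equiv> matrix_inv H *v q"
  shows "expectation (\<lambda>\<omega>. quad_obj H q (noisy_theta H ts \<alpha> \<beta> \<theta>0 (\<lambda>n. \<epsilon> n \<omega>) N)) - quad_obj H q ts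
    \<le> (K * (norm (\<theta>0 - ts))\<^sup>2 + real N * (\<alpha> * real N + \<beta>)\<^sup>2 * K * trace C) / (2 * (real N)\<^sup>2)"
proof -
  define eta where "eta \<omega> = noisy_eta H ts \<alpha> \<beta> \<theta>0 (\<lambda>n. \<epsilon> n \<omega>) N" for \<omega>
  define Q where "Q \<omega> = eta \<omega> \<bullet> (H *v eta \<omega>)" for \<omega>
  note E = expectation_noisy_eta_quadratic[of ts \<alpha> \<beta> \<theta>0 N, folded eta_def, folded Q_def]
  have N: "0 < real N" using assms(1) by simp
  have excess: "quad_obj H q (noisy_theta H ts \<alpha> \<beta> \<theta>0 (\<lambda>n. \<epsilon> n \<omega>) N) - quad_obj H q ts
      = Q \<omega> / (2 * (real N)\<^sup>2)" for \<omega>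
    using quad_obj_excess[OF H_sym H_pd, of q "noisy_theta H ts \<alpha> \<beta> \<theta>0 (\<lambda>n. \<epsilon> n \<omega>) N"] N
    by (simp add: Q_def eta_def noisy_eta_def ts_def matrix_vector_mult_scaleR power2_eq_square)
  have "propagator H \<alpha> \<beta> N (\<theta>0 - ts) \<bullet> (H *v propagator H \<alpha> \<beta> N (\<theta>0 - ts)) \<le> K * (norm (\<theta>0 - ts))\<^sup>2"
    using K[of N "\<theta>0 - ts"] by (simp add: power2_norm_eq_inner)
  then have "expectation Q \<le> K * (norm (\<theta>0 - ts))\<^sup>2 + (\<Sum>j\<in>{2..N}. (\<alpha> * real N + \<beta>)\<^sup>2 * K * trace C)"
    unfolding E(2) using expectation_noise_term_le[OF _ _ assms(2-4) K]
    by (intro add_mono sum_mono) auto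
  also have "\<dots> \<le> K * (norm (\<theta>0 - ts))\<^sup>2 + real N * ((\<alpha> * real N + \<beta>)\<^sup>2 * K * trace C)"
    using assms(4) trace_noise_cov_nonneg by (simp add: mult_right_mono)
  finally have bound: "expectation Q \<le> K * (norm (\<theta>0 - ts))\<^sup>2 + real N * (\<alpha> * real N + \<beta>)\<^sup>2 * K * trace C"
    by (simp add: mult.assoc)
  have "expectation (\<lambda>\<omega>. quad_obj H q (noisy_theta H ts \<alpha> \<beta> \<theta>0 (\<lambda>n. \<epsilon> n \<omega>) N))
      = expectation (\<lambda>\<omega>. quad_obj H q ts + Q \<omega> / (2 * (real N)\<^sup>2))"
    using excess by (intro Bochner_Integration.integral_cong) (auto simp: algebra_simps)
  also have "\<dots> = quad_obj H q ts + expectation Q / (2 * (real N)\<^sup>2)"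
    using E(1) by (simp add: prob_space)
  also have "\<dots> \<le> quad_obj H q ts
      + (K * (norm (\<theta>0 - ts))\<^sup>2 + real N * (\<alpha> * real N + \<beta>)\<^sup>2 * K * trace C) / (2 * (real N)\<^sup>2)"
    using bound N by (simp add: divide_right_mono)
  finally show ?thesis by simp
qed

lemma expected_excess_le_const:
  fixes q \<theta>0 :: "real^'d" and \<alpha> \<beta> :: real and N :: nat
  assumes "N \<ge> 1" "0 < \<alpha>" "0 \<le> \<beta>" "\<beta> \<le> 2 / largest_eigenvalue H - \<alpha>"
  defines "ts \<equiv> matrix_inv H *v q"
  shows "expectation (\<lambda>\<omega>. quad_obj H q (noisy_theta H ts \<alpha> \<beta> \<theta>0 (\<lambda>n. \<epsilon> n \<omega>) N)) - quad_obj H q ts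
    \<le> (norm (\<theta>0 - ts))\<^sup>2 / (\<alpha> * real N ^ 2) + (\<alpha> * real N + \<beta>)\<^sup>2 / (\<alpha> * real N) * trace C"
proof -
  have "expectation (\<lambda>\<omega>. quad_obj H q (noisy_theta H ts \<alpha> \<beta> \<theta>0 (\<lambda>n. \<epsilon> n \<omega>) N)) - quad_obj H q ts
    \<le> ((2 / \<alpha>) * (norm (\<theta>0 - ts))\<^sup>2 + real N * (\<alpha> * real N + \<beta>)\<^sup>2 * (2 / \<alpha>) * trace C) / (2 * (real N)\<^sup>2)"
    unfolding ts_def using assms(1-3)
    by (intro expected_excess_le propagator_quadratic_form_le_const[OF H_sym H_pd assms(2-4)]) auto
  also have "\<dots> = (norm (\<theta>0 - ts))\<^sup>2 / (\<alpha> * real N ^ 2) + (\<alpha> * real N + \<beta>)\<^sup>2 / (\<alpha> * real N) * trace C"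
    using assms(1,2) by (simp add: field_simps power2_eq_square)
  finally show ?thesis .
qed

lemma expected_excess_le_linear:
  fixes q \<theta>0 :: "real^'d" and \<alpha> \<beta> :: real and N :: nat
  assumes "N \<ge> 1" "0 \<le> \<alpha>" "0 \<le> \<beta>" "\<beta> \<le> 2 / largest_eigenvalue H - \<alpha>" "0 < \<alpha> + \<beta>"
  defines "ts \<equiv> matrix_inv H *v q"
  shows "expectation (\<lambda>\<omega>. quad_obj H q (noisy_theta H ts \<alpha> \<beta> \<theta>0 (\<lambda>n. \<epsilon> n \<omega>) N)) - quad_obj H q ts
    \<le> (norm (\<theta>0 - ts))\<^sup>2 / ((\<alpha> + \<beta>) * real N) + (\<alpha> * real N + \<beta>)\<^sup>2 / (\<alpha> + \<beta>) * trace C"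
proof -
  define K where "K = 2 * real N / (\<alpha> + \<beta>)"
  have "propagator H \<alpha> \<beta> m v \<bullet> (H *v propagator H \<alpha> \<beta> m v) \<le> K * (v \<bullet> v)" if "m \<le> N" for m v
  proof -
    have "propagator H \<alpha> \<beta> m v \<bullet> (H *v propagator H \<alpha> \<beta> m v) \<le> (2 * real m / (\<alpha> + \<beta>)) * (v \<bullet> v)"
      by (rule propagator_quadratic_form_le_linear[OF H_sym H_pd assms(2-5)])
    also have "\<dots> \<le> K * (v \<bullet> v)"
      unfolding K_def using that assms(5) by (intro mult_right_mono divide_right_mono) auto
    finally show ?thesis .
  qed
  then have "expectation (\<lambda>\<omega>. quad_obj H q (noisy_theta H ts \<alpha> \<beta> \<theta>0 (\<lambda>n. \<epsilon> n \<omega>) N)) - quad_obj H q ts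
    \<le> (K * (norm (\<theta>0 - ts))\<^sup>2 + real N * (\<alpha> * real N + \<beta>)\<^sup>2 * K * trace C) / (2 * (real N)\<^sup>2)"
    unfolding ts_def using assms(1-3,5) by (intro expected_excess_le) (auto simp: K_def)
  also have "\<dots> = (norm (\<theta>0 - ts))\<^sup>2 / ((\<alpha> + \<beta>) * real N) + (\<alpha> * real N + \<beta>)\<^sup>2 / (\<alpha> + \<beta>) * trace C"
  proof -
    have "\<alpha> + \<beta> \<noteq> 0" "real N \<noteq> 0" using assms(1,5) by auto
    then show ?thesis unfolding K_def by (simp add: divide_simps power2_eq_square) (simp add: algebra_simps)
  qed
  finally show ?thesis .
qed

end

theorem theorem3:
  fixes M :: "'w measure"
    and H C :: "real^'d^'d"
    and q \<theta>0 :: "real^'d"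
    and \<epsilon> :: "nat \<Rightarrow> 'w \<Rightarrow> real^'d"
    and \<alpha> \<beta> :: real and N :: nat
  assumes "prob_space M"
    and H_sym: "transpose H = H"
    and H_pd: "\<And>x. x \<noteq> 0 \<Longrightarrow> x \<bullet> (H *v x) > 0"
    and C_sym: "transpose C = C"
    and C_psd: "\<And>x. x \<bullet> (C *v x) \<ge> 0"
    and eps_meas: "\<And>n. n \<ge> 2 \<Longrightarrow> \<epsilon> n \<in> borel_measurable M"
    and eps_L2: "\<And>n. n \<ge> 2 \<Longrightarrow> integrable M (\<lambda>\<omega>. (norm (\<epsilon> n \<omega>))\<^sup>2)"
    and eps_mean: "\<And>n. n \<ge> 2 \<Longrightarrow> prob_space.expectation M (\<epsilon> n) = 0"
    and eps_uncorr: "\<And>n m i j. n \<ge> 2 \<Longrightarrow> m \<ge> 2 \<Longrightarrow> n \<noteq> m \<Longrightarrow>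
          prob_space.expectation M (\<lambda>\<omega>. \<epsilon> n \<omega> $ i * \<epsilon> m \<omega> $ j) = 0"
    and eps_cov: "\<And>n i j. n \<ge> 2 \<Longrightarrow>
          prob_space.expectation M (\<lambda>\<omega>. \<epsilon> n \<omega> $ i * \<epsilon> n \<omega> $ j) = C $ i $ j"
    and N_pos: "N \<ge> 1"
    and \<alpha>_nn: "0 \<le> \<alpha>" and \<alpha>_le: "\<alpha> \<le> 1 / largest_eigenvalue H"
    and \<beta>_nn: "0 \<le> \<beta>" and \<beta>_le: "\<beta> \<le> 2 / largest_eigenvalue H - \<alpha>"
  shows "ereal (prob_space.expectation M
             (\<lambda>\<omega>. quad_obj H q (noisy_theta H (matrix_inv H *v q) \<alpha> \<beta> \<theta>0 (\<lambda>n. \<epsilon> n \<omega>) N))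
           - quad_obj H q (matrix_inv H *v q))
         \<le> min (if \<alpha> > 0 then ereal ((norm (\<theta>0 - matrix_inv H *v q))\<^sup>2 / (\<alpha> * real N ^ 2)
                      + (\<alpha> * real N + \<beta>)\<^sup>2 / (\<alpha> * real N) * trace C)
                 else \<infinity>)
               (if \<alpha> + \<beta> > 0 then ereal (4 * (norm (\<theta>0 - matrix_inv H *v q))\<^sup>2 / ((\<alpha> + \<beta>) * real N)
                      + 4 * (\<alpha> * real N + \<beta>)\<^sup>2 / (\<alpha> + \<beta>) * trace C)
                 else \<infinity>)"
proof -
  interpret noisy_gradient M H C \<epsilon>
    by (intro noisy_gradient.intro noisy_gradient_axioms.intro assms(1)) (fact assms)+
  let ?ts = "matrix_inv H *v q"
  let ?gap = "expectation (\<lambda>\<omega>. quad_obj H q (noisy_theta H ?ts \<alpha> \<beta> \<theta>0 (\<lambda>n. \<epsilon> n \<omega>) N))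
    - quad_obj H q ?ts"
  have const: "?gap \<le> (norm (\<theta>0 - ?ts))\<^sup>2 / (\<alpha> * real N ^ 2) + (\<alpha> * real N + \<beta>)\<^sup>2 / (\<alpha> * real N) * trace C"
    if "\<alpha> > 0"
    using expected_excess_le_const[OF N_pos that \<beta>_nn \<beta>_le] .
  have linear: "?gap \<le> 4 * (norm (\<theta>0 - ?ts))\<^sup>2 / ((\<alpha> + \<beta>) * real N) + 4 * (\<alpha> * real N + \<beta>)\<^sup>2 / (\<alpha> + \<beta>) * trace C"
    if "\<alpha> + \<beta> > 0"
  proof -
    have "0 \<le> (norm (\<theta>0 - ?ts))\<^sup>2 / ((\<alpha> + \<beta>) * real N)" "0 \<le> (\<alpha> * real N + \<beta>)\<^sup>2 / (\<alpha> + \<beta>) * trace C"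
      using that trace_noise_cov_nonneg by simp_all
    moreover have "4 * (norm (\<theta>0 - ?ts))\<^sup>2 / ((\<alpha> + \<beta>) * real N) = 4 * ((norm (\<theta>0 - ?ts))\<^sup>2 / ((\<alpha> + \<beta>) * real N))"
      "4 * (\<alpha> * real N + \<beta>)\<^sup>2 / (\<alpha> + \<beta>) * trace C = 4 * ((\<alpha> * real N + \<beta>)\<^sup>2 / (\<alpha> + \<beta>) * trace C)"
      by simp_all
    ultimately show ?thesis
      using expected_excess_le_linear[OF N_pos \<alpha>_nn \<beta>_nn \<beta>_le that, of q \<theta>0] by linarith
  qed
  show ?thesis
    using const linear by (simp add: min.bounded_iff)
qed

end
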